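(* Let $n>2$ be an integer and $g=3n+1$, and let $G=\{\ell_1<\dots<\ell_g\}$ be a pure $(2n)$-sparse gapset of genus $g$. Then there is a unique $\alpha\in[1,g-1]$ such that $\ell_{\alpha+1}-\ell_\alpha=2n$.
   Context: A gapset is a finite set $G\subset\mathbb{N}=\{1,2,\dots\}$ such that whenever $z\in G$ and $z=x+y$ with $x,y\in\mathbb{N}$, then $x\in G$ or $y\in G$; its genus is $g=\#G$. $G$ is pure $\kappa$-sparse if $\ell_{i+1}-\ell_i\le\kappa$ for all $i$ with equality for some $i$. *)

theory Defs
  imports Main
begin

definition gapset :: "nat set \<Rightarrow> bool" where
  "gapset G \<longleftrightarrow> finite G \<and> 0 \<notin> G \<and>
     (\<forall>z\<in>G. \<forall>x y. 0 < x \<and> 0 < y \<and> z = x + y \<longrightarrow> x \<in> G \<or> y \<in> G)"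

definition ell :: "nat set \<Rightarrow> nat \<Rightarrow> nat" where
  "ell G i = sorted_list_of_set G ! (i - 1)"

definition pure_sparse :: "nat \<Rightarrow> nat set \<Rightarrow> bool" where
  "pure_sparse \<kappa> G \<longleftrightarrow>
     (\<forall>i. 1 \<le> i \<and> i < card G \<longrightarrow> ell G (i + 1) - ell G i \<le> \<kappa>) \<and>
     (\<exists>i. 1 \<le> i \<and> i < card G \<and> ell G (i + 1) - ell G i = \<kappa>)"

end

theory Submission
  imports Defs
begin

text \<open>Each index \<open>i\<close> with \<open>\<ell>\<^sub>i\<^sub>+\<^sub>1 - \<ell>\<^sub>i = \<kappa>\<close> contributes \<open>\<kappa> - 1\<close> non-gaps strictly between
  \<open>\<ell>\<^sub>i\<close> and \<open>\<ell>\<^sub>i\<^sub>+\<^sub>1\<close>. If there are two such indices \<open>p < q\<close>, all \<open>2(\<kappa> - 1)\<close> of these non-gaps lie below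
  the gap \<open>F = \<ell>\<^sub>q\<^sub>+\<^sub>1\<close>. For a non-gap \<open>s < F\<close> the gapset property forces \<open>F - s\<close> to be a gap, so
  reflection at \<open>F\<close> embeds these non-gaps into \<open>G - {F}\<close>. For \<open>\<kappa> = 2n\<close> and genus \<open>3n + 1\<close> this
  gives \<open>4n - 2 \<le> 3n\<close>, impossible for \<open>n > 2\<close>.\<close>

lemma ell_in_set:
  assumes "finite G" "1 \<le> i" "i \<le> card G"
  shows "ell G i \<in> G"
proof -
  have "i - 1 < length (sorted_list_of_set G)"
    using assms by simp
  then show ?thesis
    using assms(1) unfolding ell_def by (metis nth_mem set_sorted_list_of_set)
qed

lemma ell_mono:
  assumes "finite G" "1 \<le> i" "i \<le> j" "j \<le> card G"
  shows "ell G i \<le> ell G j"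
  using assms unfolding ell_def by (intro sorted_nth_mono) auto

lemma ell_consecutive_disjoint:
  assumes "finite G" "1 \<le> i" "i < card G"
  shows "{ell G i<..<ell G (i + 1)} \<inter> G = {}"
proof (rule ccontr)
  let ?xs = "sorted_list_of_set G"
  assume "{ell G i<..<ell G (i + 1)} \<inter> G \<noteq> {}"
  then obtain x where x: "x \<in> G" "ell G i < x" "x < ell G (i + 1)" by auto
  obtain j where j: "j < card G" "?xs ! j = x"
    using x(1) assms(1) by (metis in_set_conv_nth length_sorted_list_of_set set_sorted_list_of_set)
  show False
  proof (cases "j \<le> i - 1")
    case True
    then have "?xs ! j \<le> ?xs ! (i - 1)" using j assms by (intro sorted_nth_mono) auto
    then show ?thesis using x(2) j unfolding ell_def by simp
  next
    case False
    then have "?xs ! i \<le> ?xs ! j" using j assms by (intro sorted_nth_mono) auto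
    then show ?thesis using x(3) j unfolding ell_def by simp
  qed
qed

lemma gapset_card_nongaps_below:
  assumes "gapset G" "F \<in> G" "A \<subseteq> {0<..<F}" "A \<inter> G = {}"
  shows "card A < card G"
proof -
  have fin: "finite G"
    using assms(1) unfolding gapset_def by blast
  have "F - s \<in> G - {F}" if "s \<in> A" for s
  proof -
    have "0 < s" "s < F" "s \<notin> G" using that assms(3,4) by auto
    moreover have "s \<in> G \<or> F - s \<in> G"
      using assms(1,2) \<open>0 < s\<close> \<open>s < F\<close> unfolding gapset_def by auto
    ultimately show ?thesis by auto
  qed
  then have "(\<lambda>s. F - s) ` A \<subseteq> G - {F}" by (intro image_subsetI)
  moreover have "inj_on (\<lambda>s. F - s) A"
    using assms(3) by (intro inj_onI) (metis diff_diff_cancel greaterThanLessThan_iff less_imp_le subsetD)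
  ultimately have "card A \<le> card (G - {F})"
    using fin by (intro card_inj_on_le) auto
  also have "\<dots> < card G"
    using fin assms(2) by (rule card_Diff1_less)
  finally show ?thesis .
qed

lemma gapset_two_wide_gaps:
  assumes "gapset G" "1 \<le> p" "p < q" "q < card G"
    and gap_p: "ell G (p + 1) - ell G p = \<kappa>"
    and gap_q: "ell G (q + 1) - ell G q = \<kappa>"
  shows "2 * (\<kappa> - 1) < card G"
proof -
  have fin: "finite G"
    using assms(1) unfolding gapset_def by blast
  define a where "a = ell G p"
  define b where "b = ell G q"
  have a: "ell G (p + 1) = a + \<kappa>"
    using gap_p ell_mono[OF fin, of p "p + 1"] assms(2-4) unfolding a_def by simp
  have b: "ell G (q + 1) = b + \<kappa>"
    using gap_q ell_mono[OF fin, of q "q + 1"] assms(2-4) unfolding b_def by simp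
  have ab: "a + \<kappa> \<le> b"
    using ell_mono[OF fin, of "p + 1" q] assms(2-4) a unfolding b_def by simp
  define A where "A = {a<..<a + \<kappa>} \<union> {b<..<b + \<kappa>}"
  have "{a<..<a + \<kappa>} \<inter> {b<..<b + \<kappa>} = {}"
    using ab by auto
  then have "card A = 2 * (\<kappa> - 1)"
    unfolding A_def by (simp add: card_Un_disjoint)
  moreover have "card A < card G"
  proof (rule gapset_card_nongaps_below[OF assms(1)])
    show "b + \<kappa> \<in> G"
      using ell_in_set[OF fin, of "q + 1"] assms(2-4) b by simp
    show "A \<subseteq> {0<..<b + \<kappa>}"
      using ab unfolding A_def by auto
    show "A \<inter> G = {}"
      using ell_consecutive_disjoint[OF fin, of p] ell_consecutive_disjoint[OF fin, of q] assms(2-4) a b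
      unfolding A_def a_def b_def by auto
  qed
  ultimately show ?thesis by simp
qed

theorem mainTheorem18:
  fixes n :: nat and G :: "nat set"
  assumes "n > 2"
    and "gapset G"
    and "card G = 3 * n + 1"
    and "pure_sparse (2 * n) G"
  shows "\<exists>!\<alpha>. 1 \<le> \<alpha> \<and> \<alpha> \<le> card G - 1 \<and> ell G (\<alpha> + 1) - ell G \<alpha> = 2 * n"
proof -
  have no_two: False
    if "1 \<le> p" "p < q" "q < card G"
      "ell G (p + 1) - ell G p = 2 * n" "ell G (q + 1) - ell G q = 2 * n" for p q
    using gapset_two_wide_gaps[OF assms(2) that] assms(1,3) by simp
  obtain i where i: "1 \<le> i" "i < card G" "ell G (i + 1) - ell G i = 2 * n"
    using assms(4) unfolding pure_sparse_def by blast
  show ?thesis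
  proof (rule ex1I[of _ i])
    show "1 \<le> i \<and> i \<le> card G - 1 \<and> ell G (i + 1) - ell G i = 2 * n"
      using i by simp
  next
    fix j assume j: "1 \<le> j \<and> j \<le> card G - 1 \<and> ell G (j + 1) - ell G j = 2 * n"
    then have "j < card G" using assms(3) by simp
    then show "j = i"
      using no_two[of i j] no_two[of j i] i j by (cases i j rule: linorder_cases) auto
  qed
qed

end
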